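(* Fix $t\in\mathbb{Z}_+$ and $\epsilon=O(t)^{-t}$. There exists a distribution $A$ over $\mathbb{R}$ such that: (1) there exist distributions $Q_1,Q_2$ with $A=(1-\epsilon)Q_1+\epsilon Q_2$; (2) $A$ matches its first $t$ moments with $\mathcal{N}(0,1)$; (3) $\mathbb{E}_{X\sim Q_1}[X]=\delta$, where $\delta=\frac1{2000}\frac1t\epsilon^{1-1/t}$; (4) for all $i\ge1$, $(\mathbb{E}_{X\sim Q_1}[|X-\delta|^i])^{1/i}=O(\sqrt i)$; (5) $\chi^2(A,\mathcal{N}(0,1))<\exp(O(\delta^2/\epsilon^2))$.
   Context: $\chi^2(A,N)=\int A(x)^2/N(x)\,dx-1$. The hypothesis $\epsilon=O(t)^{-t}$ means $0<\epsilon\le(C_0t)^{-t}$ for a suitable absolute constant $C_0$. *)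

theory Defs
  imports "HOL-Probability.Probability"
begin

definition is_density :: "(real \<Rightarrow> real) \<Rightarrow> bool" where
  "is_density f \<longleftrightarrow> f \<in> borel_measurable lborel \<and> (\<forall>x. 0 \<le> f x)
     \<and> integrable lborel f \<and> (LINT x|lborel. f x) = 1"

definition chi2 :: "(real \<Rightarrow> real) \<Rightarrow> (real \<Rightarrow> real) \<Rightarrow> real" where
  "chi2 a n = (LINT x|lborel. (a x)\<^sup>2 / n x) - 1"

end

theory Submission
  imports Defs "HOL-Computational_Algebra.Polynomial"
begin

text \<open>Take A = N(0,1) + \<epsilon> (P + Q2), where Q2 = N(-m, 1/2) is a far bump at -m, with m about
  \<delta>/\<epsilon>, and P = \<Sum>j W j N(j/(t+1), 1/2) is a signed combination of bumps on a grid in [0,1].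
  The k-th raw moment of N(c, \<sigma>^2) is a polynomial of degree k in c, so choosing W j = - L j (-m),
  with L the Lagrange basis of the grid, makes P + Q2 orthogonal to all polynomials of degree at
  most t, and A matches the moments of N(0,1) up to order t. The weights are at most
  ((m+1)(t+1))^t each, and the hypothesis on \<epsilon> makes their total at most 1/(5 \<epsilon>): hence
  Q1 = (N(0,1) + \<epsilon> P)/(1 - \<epsilon>) is a density bounded by 4 N(0,1), therefore sub-Gaussian, and its
  mean is \<epsilon> m/(1 - \<epsilon>) = \<delta>. The chi-square divergence comes from the far bump alone and is of
  order exp(2 m^2/3).\<close>

lemma normal_central_moment_shift:
  assumes "(\<sigma>::real) > 0"
  shows "(LINT x|lborel. normal_density \<mu> \<sigma> x * (x - \<mu>) ^ n) = (LINT x|lborel. normal_density 0 \<sigma> x * x ^ n)"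
proof (cases "even n")
  case True
  then obtain k where "n = 2 * k" by (auto elim: evenE)
  then show ?thesis
    using integral_normal_moment_even[OF assms, of \<mu> k] integral_normal_moment_even[OF assms, of 0 k] by simp
next
  case False
  then obtain k where "n = 2 * k + 1" by (auto elim: oddE)
  then show ?thesis
    using integral_normal_moment_odd[OF assms, of \<mu> k] integral_normal_moment_odd[OF assms, of 0 k] by simp
qed

lemma normal_raw_moment:
  assumes "(\<sigma>::real) > 0"
  shows "integrable lborel (\<lambda>x. x ^ k * normal_density c \<sigma> x)"
    and "(LINT x|lborel. x ^ k * normal_density c \<sigma> x)
           = (\<Sum>i\<le>k. of_nat (k choose i) * c ^ i * (LINT x|lborel. normal_density 0 \<sigma> x * x ^ (k - i)))"
proof -
  have binomial: "(\<lambda>x. x ^ k * normal_density c \<sigma> x)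
      = (\<lambda>x. \<Sum>i\<le>k. (of_nat (k choose i) * c ^ i) * (normal_density c \<sigma> x * (x - c) ^ (k - i)))"
  proof
    fix x :: real
    have "x ^ k = (c + (x - c)) ^ k" by simp
    also have "\<dots> = (\<Sum>i\<le>k. of_nat (k choose i) * c ^ i * (x - c) ^ (k - i))" by (rule binomial_ring)
    finally show "x ^ k * normal_density c \<sigma> x
        = (\<Sum>i\<le>k. (of_nat (k choose i) * c ^ i) * (normal_density c \<sigma> x * (x - c) ^ (k - i)))"
      by (simp add: sum_distrib_left sum_distrib_right mult.commute mult.left_commute)
  qed
  show "integrable lborel (\<lambda>x. x ^ k * normal_density c \<sigma> x)"
    unfolding binomial
    by (intro Bochner_Integration.integrable_sum integrable_mult_right integrable_normal_moment[OF assms])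
  show "(LINT x|lborel. x ^ k * normal_density c \<sigma> x)
      = (\<Sum>i\<le>k. of_nat (k choose i) * c ^ i * (LINT x|lborel. normal_density 0 \<sigma> x * x ^ (k - i)))"
    unfolding binomial
    by (subst Bochner_Integration.integral_sum)
      (auto intro!: integrable_mult_right integrable_normal_moment[OF assms] sum.cong
        simp: normal_central_moment_shift[OF assms])
qed

lemma normal_mixture_moment:
  fixes w c :: "'a \<Rightarrow> real"
  assumes "\<sigma> > 0" "finite J"
  shows "integrable lborel (\<lambda>x. x ^ k * (\<Sum>j\<in>J. w j * normal_density (c j) \<sigma> x))"
    and "(LINT x|lborel. x ^ k * (\<Sum>j\<in>J. w j * normal_density (c j) \<sigma> x))
           = (\<Sum>i\<le>k. of_nat (k choose i) * (\<Sum>j\<in>J. w j * c j ^ i)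
                 * (LINT x|lborel. normal_density 0 \<sigma> x * x ^ (k - i)))"
proof -
  have split: "(\<lambda>x. x ^ k * (\<Sum>j\<in>J. w j * normal_density (c j) \<sigma> x))
      = (\<lambda>x. \<Sum>j\<in>J. w j * (x ^ k * normal_density (c j) \<sigma> x))"
    by (simp add: sum_distrib_left mult_ac)
  show "integrable lborel (\<lambda>x. x ^ k * (\<Sum>j\<in>J. w j * normal_density (c j) \<sigma> x))"
    unfolding split by (intro Bochner_Integration.integrable_sum integrable_mult_right normal_raw_moment(1)[OF assms(1)])
  have "(LINT x|lborel. x ^ k * (\<Sum>j\<in>J. w j * normal_density (c j) \<sigma> x))
      = (\<Sum>j\<in>J. w j * (\<Sum>i\<le>k. of_nat (k choose i) * c j ^ i
           * (LINT x|lborel. normal_density 0 \<sigma> x * x ^ (k - i))))"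
    unfolding split
    by (simp add: Bochner_Integration.integral_sum normal_raw_moment[OF assms(1)])
  also have "\<dots> = (\<Sum>i\<le>k. of_nat (k choose i) * (\<Sum>j\<in>J. w j * c j ^ i)
                 * (LINT x|lborel. normal_density 0 \<sigma> x * x ^ (k - i)))"
    by (simp add: sum_distrib_left sum_distrib_right sum.swap[of _ J] mult_ac)
  finally show "(LINT x|lborel. x ^ k * (\<Sum>j\<in>J. w j * normal_density (c j) \<sigma> x))
           = (\<Sum>i\<le>k. of_nat (k choose i) * (\<Sum>j\<in>J. w j * c j ^ i)
                 * (LINT x|lborel. normal_density 0 \<sigma> x * x ^ (k - i)))" .
qed

definition lagrange_basis :: "'a set \<Rightarrow> ('a \<Rightarrow> real) \<Rightarrow> 'a \<Rightarrow> real \<Rightarrow> real" where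
  "lagrange_basis J X j y = (\<Prod>l\<in>J-{j}. (y - X l) / (X j - X l))"

lemma lagrange_basis_sum_power:
  fixes X :: "'a \<Rightarrow> real"
  assumes fin: "finite J" and inj: "inj_on X J" and i: "i < card J"
  shows "(\<Sum>j\<in>J. lagrange_basis J X j y * X j ^ i) = y ^ i"
proof -
  define p where "p = (\<Sum>j\<in>J. smult (X j ^ i / (\<Prod>l\<in>J-{j}. (X j - X l))) (\<Prod>l\<in>J-{j}. [:- X l, 1:]))"
  have poly_p: "poly p z = (\<Sum>j\<in>J. (\<Prod>l\<in>J-{j}. (z - X l) / (X j - X l)) * X j ^ i)" for z
    unfolding p_def poly_sum poly_smult poly_prod
    by (intro sum.cong refl) (simp add: prod_dividef fin)
  have "degree p \<le> card J - 1"
    unfolding p_def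
  proof (rule degree_sum_le[OF fin])
    fix j assume j: "j \<in> J"
    have "degree (\<Prod>l\<in>J-{j}. [:- X l, 1:]) \<le> (\<Sum>l\<in>J-{j}. degree [:- X l, 1:])"
      using degree_prod_sum_le[of "J-{j}" "\<lambda>l. [:- X l, 1:]"] fin by (simp add: o_def)
    also have "\<dots> = card J - 1" using j fin by simp
    finally show "degree (smult (X j ^ i / (\<Prod>l\<in>J-{j}. (X j - X l))) (\<Prod>l\<in>J-{j}. [:- X l, 1:])) \<le> card J - 1"
      using degree_smult_le order_trans by blast
  qed
  have "p = monom 1 i"
  proof (rule poly_eqI_degree[where A = "X ` J"])
    fix x assume "x \<in> X ` J"
    then obtain k where k: "k \<in> J" "x = X k" by auto
    have "(\<Sum>j\<in>J-{k}. (\<Prod>l\<in>J-{j}. (X k - X l) / (X j - X l)) * X j ^ i) = 0"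
      using k(1) fin by (intro sum.neutral ballI) (auto intro!: prod_zero bexI[of _ k])
    moreover have "(\<Prod>l\<in>J-{k}. (X k - X l) / (X k - X l)) = 1"
      using inj k(1) by (intro prod.neutral) (auto dest: inj_onD)
    ultimately have "poly p (X k) = X k ^ i"
      unfolding poly_p using k(1) fin by (simp add: sum.remove)
    then show "poly p x = poly (monom 1 i) x" using k by (simp add: poly_monom)
  next
    show "degree p < card (X ` J)" using \<open>degree p \<le> card J - 1\<close> i card_image[OF inj] by linarith
    show "degree (monom (1::real) i) < card (X ` J)" using i card_image[OF inj] by (simp add: degree_monom_eq)
  qed
  then show ?thesis using poly_p[of y] by (simp add: poly_monom lagrange_basis_def)
qed

lemma normal_density_half_variance: "normal_density c (1 / sqrt 2) x = exp (- ((x - c)\<^sup>2)) / sqrt pi"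
  by (simp add: normal_density_def power_divide real_sqrt_divide)

lemma three_sqrt_two_le_five: "3 * sqrt 2 \<le> (5::real)"
proof -
  have "sqrt 2 \<le> 5 / 3" by (rule real_le_lsqrt) (auto simp: power2_eq_square)
  then show ?thesis by simp
qed

lemma normal_density_half_variance_le_std:
  assumes "0 \<le> c" "c \<le> 1"
  shows "normal_density c (1 / sqrt 2) x \<le> 5 * std_normal_density x"
proof -
  have "- ((x - c)\<^sup>2) - (1 - x\<^sup>2 / 2) = - ((x - 2 * c)\<^sup>2) / 2 + (c\<^sup>2 - 1)"
    by (simp add: power2_eq_square field_simps)
  moreover have "c\<^sup>2 \<le> 1" using assms by (simp add: power_le_one)
  moreover have "0 \<le> (x - 2 * c)\<^sup>2" by simp
  ultimately have "- ((x - c)\<^sup>2) \<le> 1 + - x\<^sup>2 / 2" by linarith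
  then have "exp (- ((x - c)\<^sup>2)) \<le> exp 1 * exp (- x\<^sup>2 / 2)" by (simp add: exp_add[symmetric])
  also have "\<dots> \<le> 3 * exp (- x\<^sup>2 / 2)" using exp_le by simp
  finally have "exp (- ((x - c)\<^sup>2)) / sqrt pi \<le> 3 * exp (- x\<^sup>2 / 2) / sqrt pi"
    by (simp add: divide_right_mono)
  also have "\<dots> = (3 * sqrt 2) * (exp (- x\<^sup>2 / 2) / sqrt (2 * pi))"
    by (simp add: real_sqrt_mult field_simps)
  also have "\<dots> \<le> 5 * (exp (- x\<^sup>2 / 2) / sqrt (2 * pi))"
    by (intro mult_right_mono three_sqrt_two_le_five) simp
  finally show ?thesis by (simp add: normal_density_half_variance std_normal_density_def)
qed

lemma normal_density_half_variance_sq_div_std_le: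
  "(normal_density \<mu> (1 / sqrt 2) x)\<^sup>2 / std_normal_density x
     \<le> 2 * exp (2 * \<mu>\<^sup>2 / 3) * normal_density (4 * \<mu> / 3) (1 / sqrt 3) x"
proof -
  have square: "- 2 * (x - \<mu>)\<^sup>2 + x\<^sup>2 / 2 = 2 * \<mu>\<^sup>2 / 3 + (- ((x - 4 * \<mu> / 3)\<^sup>2) * 3 / 2)"
    by (simp add: power2_eq_square field_simps)
  have "(normal_density \<mu> (1 / sqrt 2) x)\<^sup>2 / std_normal_density x
      = sqrt (2 * pi) / pi * exp (- 2 * (x - \<mu>)\<^sup>2 + x\<^sup>2 / 2)"
    by (simp add: normal_density_half_variance std_normal_density_def power_divide exp_add exp_diff
        exp_minus power2_eq_square[of "exp _"] exp_add[symmetric] field_simps)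
  also have "\<dots> = sqrt (2 * pi) / pi * exp (2 * \<mu>\<^sup>2 / 3) * exp (- ((x - 4 * \<mu> / 3)\<^sup>2) * 3 / 2)"
    unfolding square exp_add by simp
  also have "\<dots> \<le> 2 * sqrt 3 / sqrt (2 * pi) * exp (2 * \<mu>\<^sup>2 / 3) * exp (- ((x - 4 * \<mu> / 3)\<^sup>2) * 3 / 2)"
  proof (intro mult_right_mono)
    have "sqrt (2 * pi) / pi = 2 / sqrt (2 * pi)"
      using pi_gt_zero by (simp add: field_simps real_sqrt_mult)
    also have "\<dots> \<le> 2 * sqrt 3 / sqrt (2 * pi)" by (simp add: divide_right_mono)
    finally show "sqrt (2 * pi) / pi \<le> 2 * sqrt 3 / sqrt (2 * pi)" .
  qed simp_all
  also have "\<dots> = 2 * exp (2 * \<mu>\<^sup>2 / 3) * normal_density (4 * \<mu> / 3) (1 / sqrt 3) x"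
    unfolding normal_density_def by (simp add: power_divide real_sqrt_divide real_sqrt_mult)
  finally show ?thesis .
qed

lemma abs_power_le_exp_square:
  assumes "i \<ge> 1"
  shows "\<bar>y\<bar> ^ i \<le> sqrt (4 * real i) ^ i * exp (y\<^sup>2 / 8)"
proof -
  define r where "r = \<bar>y\<bar> / sqrt (4 * real i)"
  have sqrt_pos: "sqrt (4 * real i) > 0" using assms by simp
  have "(r - 1)\<^sup>2 = r\<^sup>2 - 2 * r + 1" by (simp add: power2_eq_square algebra_simps)
  then have "r \<le> 1 + r\<^sup>2 / 2" using zero_le_power2[of "r - 1"] by linarith
  also have "\<dots> \<le> exp (r\<^sup>2 / 2)" by (rule exp_ge_add_one_self)
  finally have "r ^ i \<le> exp (r\<^sup>2 / 2) ^ i" by (rule power_mono) (simp add: r_def)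
  also have "\<dots> = exp (real i * (r\<^sup>2 / 2))" by (rule exp_of_nat_mult[symmetric])
  also have "real i * (r\<^sup>2 / 2) = y\<^sup>2 / 8" using assms by (simp add: r_def power_divide)
  finally have "r ^ i \<le> exp (y\<^sup>2 / 8)" .
  moreover have "\<bar>y\<bar> ^ i = sqrt (4 * real i) ^ i * r ^ i" using sqrt_pos by (simp add: r_def power_divide)
  ultimately show ?thesis using sqrt_pos by (simp add: mult_left_mono)
qed

lemma exp_square_mult_std_normal_le:
  assumes "\<bar>d\<bar> \<le> 1"
  shows "exp ((x - d)\<^sup>2 / 8) * std_normal_density x \<le> 5 * normal_density 0 (sqrt 2) x"
proof -
  have "(x + d)\<^sup>2 = 2 * x\<^sup>2 + 2 * d\<^sup>2 - (x - d)\<^sup>2" by (simp add: power2_eq_square algebra_simps)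
  moreover have "d\<^sup>2 \<le> 1" using assms power_mono[of "\<bar>d\<bar>" 1 2] by simp
  ultimately have "(x - d)\<^sup>2 / 8 \<le> 1 + x\<^sup>2 / 4" using zero_le_power2[of "x + d"] by linarith
  then have "exp ((x - d)\<^sup>2 / 8) * exp (- x\<^sup>2 / 2) \<le> exp (1 + x\<^sup>2 / 4) * exp (- x\<^sup>2 / 2)" by simp
  also have "\<dots> = exp 1 * exp (- x\<^sup>2 / 4)" by (simp add: exp_add[symmetric])
  also have "\<dots> \<le> 3 * exp (- x\<^sup>2 / 4)" using exp_le by simp
  finally have "exp ((x - d)\<^sup>2 / 8) * std_normal_density x \<le> 3 * exp (- x\<^sup>2 / 4) / sqrt (2 * pi)"
    by (simp add: std_normal_density_def divide_right_mono)
  also have "\<dots> = (3 * sqrt 2) * (exp (- x\<^sup>2 / 4) / sqrt (4 * pi))"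
    by (simp add: real_sqrt_mult field_simps)
  also have "\<dots> \<le> 5 * (exp (- x\<^sup>2 / 4) / sqrt (4 * pi))"
    by (intro mult_right_mono three_sqrt_two_le_five) simp
  finally show ?thesis by (simp add: normal_density_def)
qed

lemma is_density_normal: "\<sigma> > 0 \<Longrightarrow> is_density (normal_density \<mu> \<sigma>)"
  unfolding is_density_def by simp

lemma is_density_mixture:
  assumes "is_density p" "is_density q" "0 \<le> \<epsilon>" "\<epsilon> \<le> 1"
  shows "is_density (\<lambda>x. (1 - \<epsilon>) * p x + \<epsilon> * q x)"
  using assms unfolding is_density_def by (auto intro!: borel_measurable_add borel_measurable_times)

lemma is_density_renormalized_perturbation:
  assumes "is_density f" "g \<in> borel_measurable borel" "integrable lborel g"
    and "(LINT x|lborel. g x) = -1" "\<epsilon> < 1" "\<And>x. 0 \<le> f x + \<epsilon> * g x"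
  shows "is_density (\<lambda>x. (f x + \<epsilon> * g x) / (1 - \<epsilon>))"
  using assms unfolding is_density_def
  by (auto intro!: borel_measurable_add borel_measurable_times borel_measurable_divide)

lemma central_abs_moment_le_of_le_std_normal:
  fixes q :: "real \<Rightarrow> real"
  assumes q_meas[measurable]: "q \<in> borel_measurable borel"
    and q_nonneg: "\<And>x. 0 \<le> q x" and q_le: "\<And>x. q x \<le> C * std_normal_density x"
    and C: "C \<ge> 1" and d: "\<bar>d\<bar> \<le> 1" and i: "i \<ge> 1"
  shows "integrable lborel (\<lambda>x. \<bar>x - d\<bar> ^ i * q x)"
    and "(LINT x|lborel. \<bar>x - d\<bar> ^ i * q x) powr (1 / real i) \<le> 10 * C * sqrt (real i)"
proof -
  define K where "K = sqrt (4 * real i) ^ i"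
  have K_pos: "K > 0" using i by (simp add: K_def)
  define B where "B = (\<lambda>x. 5 * C * K * normal_density 0 (sqrt 2) x)"
  have B_int: "integrable lborel B"
    using integrable_normal_density[of "sqrt 2" 0] unfolding B_def by simp
  have pointwise: "\<bar>x - d\<bar> ^ i * q x \<le> B x" for x
  proof -
    have "\<bar>x - d\<bar> ^ i * q x \<le> (K * exp ((x - d)\<^sup>2 / 8)) * (C * std_normal_density x)"
      using abs_power_le_exp_square[OF i, of "x - d"] q_le[of x] q_nonneg[of x]
      by (intro mult_mono) (auto simp: K_def)
    also have "\<dots> = C * K * (exp ((x - d)\<^sup>2 / 8) * std_normal_density x)" by (simp add: mult_ac)
    also have "\<dots> \<le> C * K * (5 * normal_density 0 (sqrt 2) x)"
      using exp_square_mult_std_normal_le[OF d] C K_pos by (intro mult_left_mono) auto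
    finally show ?thesis by (simp add: B_def mult_ac)
  qed
  show int: "integrable lborel (\<lambda>x. \<bar>x - d\<bar> ^ i * q x)"
  proof (rule Bochner_Integration.integrable_bound[OF B_int])
    show "AE x in lborel. norm (\<bar>x - d\<bar> ^ i * q x) \<le> norm (B x)"
      using pointwise q_nonneg by (intro AE_I2) (metis abs_of_nonneg order_trans real_norm_def zero_le_mult_iff zero_le_power_abs)
  qed measurable
  have "(LINT x|lborel. \<bar>x - d\<bar> ^ i * q x) \<le> (LINT x|lborel. B x)"
    using integral_mono[OF int B_int pointwise] .
  also have "\<dots> = 5 * C * K"
    using integral_normal_density[of "sqrt 2" 0] by (simp add: B_def)
  finally have "(LINT x|lborel. \<bar>x - d\<bar> ^ i * q x) powr (1 / real i) \<le> (5 * C * K) powr (1 / real i)"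
    by (intro powr_mono2) (auto intro!: Bochner_Integration.integral_nonneg simp: q_nonneg)
  also have "\<dots> = (5 * C) powr (1 / real i) * sqrt (4 * real i)"
    using K_pos C i by (simp add: powr_mult K_def powr_realpow[symmetric] powr_powr)
  also have "\<dots> \<le> (5 * C) * (2 * sqrt (real i))"
    using C i by (intro mult_mono) (auto simp: real_sqrt_mult intro: order_trans[OF powr_mono[of _ 1]])
  finally show "(LINT x|lborel. \<bar>x - d\<bar> ^ i * q x) powr (1 / real i) \<le> 10 * C * sqrt (real i)"
    by simp
qed

lemma chi2_std_normal_le_of_le:
  fixes a :: "real \<Rightarrow> real"
  assumes a_meas[measurable]: "a \<in> borel_measurable borel" and a_nonneg: "\<And>x. 0 \<le> a x"
    and a_le: "\<And>x. a x \<le> 2 * std_normal_density x + \<epsilon> * normal_density \<mu> (1 / sqrt 2) x"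
    and \<epsilon>: "\<bar>\<epsilon>\<bar> \<le> 1 / 2"
  shows "integrable lborel (\<lambda>x. (a x)\<^sup>2 / std_normal_density x)"
    and "chi2 a std_normal_density \<le> 7 + exp (2 * \<mu>\<^sup>2 / 3)"
proof -
  define E where "E = exp (2 * \<mu>\<^sup>2 / 3)"
  define R where "R = (\<lambda>x. 8 * std_normal_density x + 4 * \<epsilon>\<^sup>2 * E * normal_density (4 * \<mu> / 3) (1 / sqrt 3) x)"
  have R_int: "integrable lborel R"
    using integrable_normal_density[of "1 / sqrt 3" "4 * \<mu> / 3"] unfolding R_def by simp
  have std_pos: "0 < std_normal_density x" for x by (simp add: normal_density_pos)
  have pointwise: "(a x)\<^sup>2 / std_normal_density x \<le> R x" for x
  proof -
    let ?\<phi> = "std_normal_density x" and ?g = "normal_density \<mu> (1 / sqrt 2) x"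
    have "(a x)\<^sup>2 \<le> (2 * ?\<phi> + \<epsilon> * ?g)\<^sup>2"
      using a_nonneg[of x] a_le[of x] by (intro power_mono) auto
    also have "\<dots> \<le> 8 * ?\<phi>\<^sup>2 + 2 * \<epsilon>\<^sup>2 * ?g\<^sup>2"
      using zero_le_power2[of "2 * ?\<phi> - \<epsilon> * ?g"] by (simp add: power2_eq_square algebra_simps)
    finally have "(a x)\<^sup>2 / ?\<phi> \<le> (8 * ?\<phi>\<^sup>2 + 2 * \<epsilon>\<^sup>2 * ?g\<^sup>2) / ?\<phi>"
      using std_pos[of x] by (simp add: divide_right_mono)
    also have "\<dots> = 8 * ?\<phi> + 2 * \<epsilon>\<^sup>2 * (?g\<^sup>2 / ?\<phi>)"
      using std_pos[of x] by (simp add: field_simps power2_eq_square)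
    also have "\<dots> \<le> 8 * ?\<phi> + 2 * \<epsilon>\<^sup>2 * (2 * E * normal_density (4 * \<mu> / 3) (1 / sqrt 3) x)"
      using normal_density_half_variance_sq_div_std_le[of \<mu> x]
      unfolding E_def by (intro add_left_mono mult_left_mono) auto
    also have "\<dots> = R x" by (simp add: R_def)
    finally show ?thesis .
  qed
  show int: "integrable lborel (\<lambda>x. (a x)\<^sup>2 / std_normal_density x)"
  proof (rule Bochner_Integration.integrable_bound[OF R_int])
    show "AE x in lborel. norm ((a x)\<^sup>2 / std_normal_density x) \<le> norm (R x)"
      using pointwise std_pos
      by (intro AE_I2) (metis abs_of_nonneg order_trans real_norm_def zero_le_power2 divide_nonneg_pos)
  qed measurable
  have "(LINT x|lborel. (a x)\<^sup>2 / std_normal_density x) \<le> (LINT x|lborel. R x)"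
    using integral_mono[OF int R_int pointwise] .
  also have "\<dots> = 8 + 4 * \<epsilon>\<^sup>2 * E"
    using integrable_normal_density[of "1 / sqrt 3" "4 * \<mu> / 3"]
      integral_normal_density[of "1 / sqrt 3" "4 * \<mu> / 3"] by (simp add: R_def)
  also have "\<dots> \<le> 8 + E"
  proof -
    have "\<bar>\<epsilon>\<bar>\<^sup>2 \<le> (1 / 2)\<^sup>2" using \<epsilon> by (intro power_mono) auto
    then show ?thesis by (simp add: E_def power_divide)
  qed
  finally show "chi2 a std_normal_density \<le> 7 + exp (2 * \<mu>\<^sup>2 / 3)"
    by (simp add: chi2_def E_def)
qed

locale gaussian_perturbation =
  fixes J :: "'a set" and X W :: "'a \<Rightarrow> real" and t :: nat and \<epsilon> m :: real
  assumes finite_J: "finite J"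
    and t_pos: "t \<ge> 1"
    and \<epsilon>_pos: "0 < \<epsilon>" and \<epsilon>_le: "\<epsilon> \<le> 1 / 2"
    and power_sums: "\<And>i. i \<le> t \<Longrightarrow> (\<Sum>j\<in>J. W j * X j ^ i) = - ((- m) ^ i)"
    and nodes: "\<And>j. j \<in> J \<Longrightarrow> 0 \<le> X j \<and> X j \<le> 1"
    and weights_small: "\<epsilon> * (\<Sum>j\<in>J. \<bar>W j\<bar>) * 5 \<le> 1"
    and shift_le: "\<bar>\<epsilon> * m / (1 - \<epsilon>)\<bar> \<le> 1"
begin

definition P :: "real \<Rightarrow> real" where
  "P x = (\<Sum>j\<in>J. W j * normal_density (X j) (1 / sqrt 2) x)"

definition Q1 :: "real \<Rightarrow> real" where
  "Q1 x = (std_normal_density x + \<epsilon> * P x) / (1 - \<epsilon>)"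

definition Q2 :: "real \<Rightarrow> real" where
  "Q2 = normal_density (- m) (1 / sqrt 2)"

definition A :: "real \<Rightarrow> real" where
  "A x = (1 - \<epsilon>) * Q1 x + \<epsilon> * Q2 x"

lemma A_eq: "A x = std_normal_density x + \<epsilon> * P x + \<epsilon> * Q2 x"
  using \<epsilon>_le by (simp add: A_def Q1_def)

lemma P_measurable[measurable]: "P \<in> borel_measurable borel"
  unfolding P_def[abs_def] by measurable

lemma Q1_measurable[measurable]: "Q1 \<in> borel_measurable borel"
  unfolding Q1_def[abs_def] by measurable

lemma A_measurable[measurable]: "A \<in> borel_measurable borel"
  unfolding A_def[abs_def] Q2_def by measurable

lemma P_moment:
  shows "integrable lborel (\<lambda>x. x ^ k * P x)"
    and "k \<le> t \<Longrightarrow> (LINT x|lborel. x ^ k * P x) = - (LINT x|lborel. x ^ k * Q2 x)"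
proof -
  have \<sigma>: "(1 / sqrt 2 :: real) > 0" by simp
  show "integrable lborel (\<lambda>x. x ^ k * P x)"
    unfolding P_def using normal_mixture_moment(1)[OF \<sigma> finite_J] .
  assume "k \<le> t"
  then show "(LINT x|lborel. x ^ k * P x) = - (LINT x|lborel. x ^ k * Q2 x)"
    unfolding P_def Q2_def normal_mixture_moment(2)[OF \<sigma> finite_J] normal_raw_moment(2)[OF \<sigma>]
    by (simp add: power_sums sum_negf[symmetric])
qed

lemma P_integral: "(LINT x|lborel. P x) = -1"
  using P_moment(2)[of 0] integral_normal_density[of "1 / sqrt 2" "- m"] by (simp add: Q2_def)

lemma P_first_moment: "(LINT x|lborel. x * P x) = m"
  using P_moment(2)[of 1] t_pos integral_normal_moment_nz_1[of "1 / sqrt 2" "- m"]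
  by (simp add: Q2_def mult.commute)

lemma abs_P_le: "\<bar>\<epsilon> * P x\<bar> \<le> std_normal_density x"
proof -
  have "\<bar>P x\<bar> \<le> (\<Sum>j\<in>J. \<bar>W j\<bar> * normal_density (X j) (1 / sqrt 2) x)"
    unfolding P_def by (rule order_trans[OF sum_abs]) (simp add: abs_mult)
  also have "\<dots> \<le> (\<Sum>j\<in>J. \<bar>W j\<bar> * (5 * std_normal_density x))"
    using nodes by (intro sum_mono mult_left_mono normal_density_half_variance_le_std) auto
  also have "\<dots> = (\<Sum>j\<in>J. \<bar>W j\<bar>) * 5 * std_normal_density x"
    by (simp add: sum_distrib_right mult.assoc)
  finally have "\<epsilon> * \<bar>P x\<bar> \<le> (\<epsilon> * (\<Sum>j\<in>J. \<bar>W j\<bar>) * 5) * std_normal_density x"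
    using \<epsilon>_pos by (simp add: mult_left_mono mult.assoc)
  also have "\<dots> \<le> std_normal_density x"
    using weights_small mult_right_mono[OF weights_small, of "std_normal_density x"] by simp
  finally show ?thesis using \<epsilon>_pos by (simp add: abs_mult)
qed

lemma Q1_nonneg: "0 \<le> Q1 x"
  using abs_P_le[of x] \<epsilon>_le by (simp add: Q1_def abs_le_iff)

lemma Q1_le: "Q1 x \<le> 4 * std_normal_density x"
proof -
  have "std_normal_density x + \<epsilon> * P x \<le> (4 * std_normal_density x) * (1 - \<epsilon>)"
    using abs_P_le[of x] \<epsilon>_le mult_right_mono[OF \<epsilon>_le, of "std_normal_density x"]
    by (simp add: abs_le_iff algebra_simps)
  then show ?thesis using \<epsilon>_le by (simp add: Q1_def pos_divide_le_eq)
qed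

lemma is_density_Q1: "is_density Q1"
proof -
  have "0 \<le> std_normal_density x + \<epsilon> * P x" for x
    using abs_P_le[of x] by (simp add: abs_le_iff)
  then show ?thesis
    unfolding Q1_def[abs_def] using \<epsilon>_le P_moment(1)[of 0] P_integral
    by (intro is_density_renormalized_perturbation is_density_normal) auto
qed

lemma is_density_Q2: "is_density Q2"
  unfolding Q2_def by (simp add: is_density_normal)

lemma is_density_A: "is_density A"
  unfolding A_def[abs_def] using \<epsilon>_pos \<epsilon>_le
  by (intro is_density_mixture is_density_Q1 is_density_Q2) auto

lemma Q1_mean:
  shows "integrable lborel (\<lambda>x. x * Q1 x)" and "(LINT x|lborel. x * Q1 x) = \<epsilon> * m / (1 - \<epsilon>)"
proof -
  have eq: "(\<lambda>x. x * Q1 x) = (\<lambda>x. (std_normal_density x * x + \<epsilon> * (x * P x)) / (1 - \<epsilon>))"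
    by (simp add: Q1_def algebra_simps)
  show "integrable lborel (\<lambda>x. x * Q1 x)"
    unfolding eq using P_moment(1)[of 1] integrable_normal_moment_nz_1[of 1 0] by simp
  show "(LINT x|lborel. x * Q1 x) = \<epsilon> * m / (1 - \<epsilon>)"
    unfolding eq using P_moment(1)[of 1] integrable_normal_moment_nz_1[of 1 0]
      integral_normal_moment_nz_1[of 1 0] P_first_moment by simp
qed

lemma A_moment:
  assumes "k \<le> t"
  shows "integrable lborel (\<lambda>x. x ^ k * A x)"
    and "(LINT x|lborel. x ^ k * A x) = (LINT x|lborel. x ^ k * std_normal_density x)"
proof -
  have eq: "(\<lambda>x. x ^ k * A x) = (\<lambda>x. x ^ k * std_normal_density x + \<epsilon> * (x ^ k * P x) + \<epsilon> * (x ^ k * Q2 x))"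
    by (simp add: A_eq algebra_simps)
  have std: "integrable lborel (\<lambda>x. x ^ k * std_normal_density x)"
    using integrable_std_normal_moment[of k] by (simp add: mult.commute)
  have Q2: "integrable lborel (\<lambda>x. x ^ k * Q2 x)"
    unfolding Q2_def by (simp add: normal_raw_moment(1))
  show "integrable lborel (\<lambda>x. x ^ k * A x)"
    unfolding eq using std Q2 P_moment(1) by simp
  show "(LINT x|lborel. x ^ k * A x) = (LINT x|lborel. x ^ k * std_normal_density x)"
    unfolding eq using std Q2 P_moment(1) P_moment(2)[OF assms] by simp
qed

lemma Q1_central_moment:
  assumes "i \<ge> 1"
  shows "integrable lborel (\<lambda>x. \<bar>x - \<epsilon> * m / (1 - \<epsilon>)\<bar> ^ i * Q1 x)"
    and "(LINT x|lborel. \<bar>x - \<epsilon> * m / (1 - \<epsilon>)\<bar> ^ i * Q1 x) powr (1 / real i) \<le> 40 * sqrt (real i)"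
  using central_abs_moment_le_of_le_std_normal[OF Q1_measurable Q1_nonneg Q1_le _ shift_le assms]
  by simp_all

lemma A_chi2:
  shows "integrable lborel (\<lambda>x. (A x)\<^sup>2 / std_normal_density x)"
    and "chi2 A std_normal_density \<le> 7 + exp (2 * m\<^sup>2 / 3)"
proof -
  have nonneg: "0 \<le> A x" for x
    using is_density_A by (simp add: is_density_def)
  have le: "A x \<le> 2 * std_normal_density x + \<epsilon> * normal_density (- m) (1 / sqrt 2) x" for x
    using abs_P_le[of x] by (simp add: A_eq Q2_def abs_le_iff)
  have "\<bar>\<epsilon>\<bar> \<le> 1 / 2" using \<epsilon>_pos \<epsilon>_le by simp
  from chi2_std_normal_le_of_le[OF A_measurable nonneg le this]
  show "integrable lborel (\<lambda>x. (A x)\<^sup>2 / std_normal_density x)"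
    and "chi2 A std_normal_density \<le> 7 + exp (2 * m\<^sup>2 / 3)"
    by simp_all
qed

end

definition grid :: "nat \<Rightarrow> nat \<Rightarrow> real" where
  "grid t j = real j / (real t + 1)"

lemma grid_lagrange_basis:
  fixes t :: nat and y :: real
  shows "\<And>i. i \<le> t \<Longrightarrow> (\<Sum>j\<in>{1..t+1}. lagrange_basis {1..t+1} (grid t) j y * grid t j ^ i) = y ^ i"
    and "\<And>j. j \<in> {1..t+1} \<Longrightarrow> 0 \<le> grid t j \<and> grid t j \<le> 1"
    and "\<And>j. j \<in> {1..t+1} \<Longrightarrow> \<bar>lagrange_basis {1..t+1} (grid t) j y\<bar> \<le> ((\<bar>y\<bar> + 1) * (real t + 1)) ^ t"
proof -
  show "(\<Sum>j\<in>{1..t+1}. lagrange_basis {1..t+1} (grid t) j y * grid t j ^ i) = y ^ i" if "i \<le> t" for i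
    using that by (intro lagrange_basis_sum_power) (auto simp: inj_on_def grid_def)
  show nodes: "0 \<le> grid t j \<and> grid t j \<le> 1" if "j \<in> {1..t+1}" for j
    using that by (auto simp: grid_def field_simps)
  show "\<bar>lagrange_basis {1..t+1} (grid t) j y\<bar> \<le> ((\<bar>y\<bar> + 1) * (real t + 1)) ^ t"
    if j: "j \<in> {1..t+1}" for j
    unfolding lagrange_basis_def abs_prod
  proof (rule prod_le_power)
    fix l assume l: "l \<in> {1..t+1} - {j}"
    have "\<bar>real j - real l\<bar> \<ge> 1" using l by auto
    then have gap: "1 \<le> \<bar>grid t j - grid t l\<bar> * (real t + 1)"
      by (simp add: grid_def diff_divide_distrib[symmetric] abs_divide)
    then have gap_pos: "\<bar>grid t j - grid t l\<bar> > 0" by (cases "grid t j = grid t l") auto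
    have "\<bar>y - grid t l\<bar> \<le> (\<bar>y\<bar> + 1) * 1" using nodes[of l] l by auto
    also have "\<dots> \<le> (\<bar>y\<bar> + 1) * (\<bar>grid t j - grid t l\<bar> * (real t + 1))" using gap by (intro mult_left_mono) auto
    finally show "0 \<le> \<bar>(y - grid t l) / (grid t j - grid t l)\<bar> \<and> \<bar>(y - grid t l) / (grid t j - grid t l)\<bar> \<le> (\<bar>y\<bar> + 1) * (real t + 1)"
      using gap_pos by (simp add: divide_le_eq mult_ac)
  next
    show "card ({1..t+1} - {j}) \<le> t" using j by simp
    show "1 \<le> (\<bar>y\<bar> + 1) * (real t + 1)" using mult_mono[of 1 "\<bar>y\<bar> + 1" 1 "real t + 1"] by simp
  qed
qed

lemma five_succ_mult_power_le_one:
  assumes "t \<ge> 1" "0 \<le> v" "v \<le> 1 / 500"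
  shows "5 * (real t + 1) * v ^ t \<le> 1"
proof -
  have "Suc t \<le> 2 ^ t" by (simp add: Suc_le_eq)
  then have "real t + 1 \<le> 2 ^ t" by (metis add.commute of_nat_Suc of_nat_le_iff of_nat_numeral of_nat_power)
  moreover have "v ^ t \<le> (1 / 500) ^ t" using assms by (intro power_mono)
  ultimately have "5 * (real t + 1) * v ^ t \<le> 5 * 2 ^ t * (1 / 500) ^ t"
    using assms by (intro mult_mono) auto
  also have "\<dots> = 5 * (1 / 250) ^ t" by (simp add: power_mult_distrib[symmetric])
  also have "\<dots> \<le> 5 * (1 / 250) ^ 1" using assms by (intro mult_left_mono power_decreasing) auto
  finally show ?thesis by simp
qed

lemma small_eps_parameters:
  fixes t :: nat and \<epsilon> :: real
  assumes t: "t \<ge> 1" and \<epsilon>_pos: "0 < \<epsilon>" and \<epsilon>_le: "\<epsilon> \<le> (4000 * real t) powr (- real t)"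
  defines "\<delta> \<equiv> (1 / 2000) * (1 / real t) * \<epsilon> powr (1 - 1 / real t)"
  shows "\<epsilon> \<le> 1 / 2" and "2 \<le> \<delta> / \<epsilon>" and "\<delta> \<le> 1"
    and "5 * (real t + 1) * \<epsilon> * ((\<delta> / \<epsilon> + 1) * (real t + 1)) ^ t \<le> 1"
proof -
  define u where "u = \<epsilon> powr (1 / real t)"
  have t_real: "real t \<ge> 1" using t by simp
  have u_pos: "u > 0" using \<epsilon>_pos by (simp add: u_def)
  have "u \<le> ((4000 * real t) powr (- real t)) powr (1 / real t)"
    unfolding u_def using \<epsilon>_pos \<epsilon>_le by (intro powr_mono2) auto
  also have "\<dots> = (4000 * real t) powr (- 1)" using t_real by (simp add: powr_powr)
  also have "\<dots> = 1 / (4000 * real t)" using t_real by (simp add: powr_minus_divide)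
  finally have u_le: "u \<le> 1 / (4000 * real t)" .
  have \<epsilon>_eq: "\<epsilon> = u ^ t"
    using \<epsilon>_pos t_real by (simp add: u_def powr_realpow[symmetric] powr_powr)
  have inv_le: "1 / (4000 * real t) \<le> 1 / 4000" using t_real by (simp add: field_simps)
  then have "u \<le> 1" using u_le by linarith
  then have \<epsilon>_le_u: "\<epsilon> \<le> u" using \<epsilon>_eq power_decreasing[of 1 t u] t u_pos by simp
  show "\<epsilon> \<le> 1 / 2" using \<epsilon>_le_u u_le inv_le by linarith
  have ratio: "\<delta> / \<epsilon> = 1 / (2000 * real t * u)"
    using \<epsilon>_pos by (simp add: \<delta>_def powr_diff u_def)
  show "2 \<le> \<delta> / \<epsilon>"
    unfolding ratio using u_le u_pos t_real by (simp add: field_simps)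
  have "\<delta> = \<epsilon> / (2000 * real t * u)" using ratio \<epsilon>_pos by (simp add: field_simps)
  also have "\<dots> \<le> u / (2000 * real t * u)" using \<epsilon>_le_u u_pos t_real by (intro divide_right_mono) auto
  also have "\<dots> \<le> 1" using u_pos t_real by simp
  finally show "\<delta> \<le> 1" .
  define B where "B = (\<delta> / \<epsilon> + 1) * (real t + 1)"
  have u_ratio: "u * (\<delta> / \<epsilon>) = 1 / (2000 * real t)" using u_pos unfolding ratio by simp
  have "u * B = (u * (\<delta> / \<epsilon>) + u) * (real t + 1)" by (simp add: B_def distrib_left mult.assoc)
  also have "\<dots> = (1 / (2000 * real t) + u) * (real t + 1)" by (simp only: u_ratio)
  also have "\<dots> \<le> (1 / (2000 * real t) + 1 / (4000 * real t)) * (real t + 1)"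
    using u_le by (intro mult_right_mono) auto
  also have "\<dots> = 3 / 4000 * ((real t + 1) / real t)" using t_real by (simp add: field_simps)
  also have "\<dots> \<le> 3 / 4000 * 2" using t_real by (intro mult_left_mono) (auto simp: field_simps)
  finally have uB: "u * B \<le> 1 / 500" by simp
  have "5 * (real t + 1) * \<epsilon> * B ^ t = 5 * (real t + 1) * (u * B) ^ t"
    by (simp add: \<epsilon>_eq power_mult_distrib)
  also have "\<dots> \<le> 1"
    using uB u_pos \<open>2 \<le> \<delta> / \<epsilon>\<close> by (intro five_succ_mult_power_le_one t) (auto simp: B_def)
  finally show "5 * (real t + 1) * \<epsilon> * ((\<delta> / \<epsilon> + 1) * (real t + 1)) ^ t \<le> 1"
    unfolding B_def .
qed

lemma seven_plus_exp_less:
  fixes m r :: real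
  assumes "2 \<le> r" "\<bar>m\<bar> \<le> r"
  shows "7 + exp (2 * m\<^sup>2 / 3) < exp (4 * r\<^sup>2)"
proof -
  have "m\<^sup>2 \<le> r\<^sup>2" using assms power_mono[of "\<bar>m\<bar>" r 2] by simp
  then have "2 * m\<^sup>2 / 3 \<le> r\<^sup>2" using zero_le_power2[of m] by linarith
  then have "exp (2 * m\<^sup>2 / 3) \<le> exp (r\<^sup>2)" by simp
  moreover have "1 < exp (r\<^sup>2)" using assms by simp
  ultimately have "7 + exp (2 * m\<^sup>2 / 3) < 8 * exp (r\<^sup>2)" by linarith
  also have "(8::real) \<le> exp 3"
  proof -
    have "(2::real) ^ 3 \<le> exp 1 ^ 3" using exp_ge_add_one_self[of 1] by (intro power_mono) auto
    then show ?thesis by (simp add: exp_of_nat_mult[symmetric])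
  qed
  then have "8 * exp (r\<^sup>2) \<le> exp (3 + r\<^sup>2)" by (simp add: exp_add)
  also have "\<dots> \<le> exp (4 * r\<^sup>2)" using power_mono[of 2 r 2] assms by simp
  finally show ?thesis .
qed

lemma moment_matching_perturbation_exists:
  fixes t :: nat and \<epsilon> :: real
  assumes t: "t \<ge> 1" and \<epsilon>_pos: "0 < \<epsilon>" and \<epsilon>_le: "\<epsilon> \<le> (4000 * real t) powr (- real t)"
  defines "\<delta> \<equiv> (1 / 2000) * (1 / real t) * \<epsilon> powr (1 - 1 / real t)"
  shows "\<exists>a q1 q2 :: real \<Rightarrow> real.
         is_density a \<and> is_density q1 \<and> is_density q2 \<and>
         (\<forall>x. a x = (1 - \<epsilon>) * q1 x + \<epsilon> * q2 x) \<and>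
         (\<forall>k\<in>{1..t}. integrable lborel (\<lambda>x. x ^ k * a x) \<and>
            (LINT x|lborel. x ^ k * a x) = (LINT x|lborel. x ^ k * std_normal_density x)) \<and>
         integrable lborel (\<lambda>x. x * q1 x) \<and> (LINT x|lborel. x * q1 x) = \<delta> \<and>
         (\<forall>i::nat. i \<ge> 1 \<longrightarrow> integrable lborel (\<lambda>x. \<bar>x - \<delta>\<bar> ^ i * q1 x) \<and>
            (LINT x|lborel. \<bar>x - \<delta>\<bar> ^ i * q1 x) powr (1 / real i) \<le> 40 * sqrt (real i)) \<and>
         integrable lborel (\<lambda>x. (a x)\<^sup>2 / std_normal_density x) \<and>
         chi2 a std_normal_density < exp (4 * \<delta>\<^sup>2 / \<epsilon>\<^sup>2)"
proof -
  note params = small_eps_parameters[OF t \<epsilon>_pos \<epsilon>_le, folded \<delta>_def]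
  define m where "m = (1 - \<epsilon>) * (\<delta> / \<epsilon>)"
  have m_pos: "0 < m"
    unfolding m_def using params(1,2) by (intro mult_pos_pos) auto
  have m_le: "m \<le> \<delta> / \<epsilon>"
    unfolding m_def using params(1,2) \<epsilon>_pos by (intro mult_left_le_one_le) auto
  have shift: "\<epsilon> * m / (1 - \<epsilon>) = \<delta>"
    using params(1) \<epsilon>_pos by (simp add: m_def)
  define W where "W j = - lagrange_basis {1..t+1} (grid t) j (- m)" for j
  interpret gaussian_perturbation "{1..t+1}" "grid t" W t \<epsilon> m
  proof
    show "(\<Sum>j\<in>{1..t+1}. W j * grid t j ^ i) = - ((- m) ^ i)" if "i \<le> t" for i
      using grid_lagrange_basis(1)[OF that, of "- m"] by (simp add: W_def sum_negf)
    have "(\<Sum>j\<in>{1..t+1}. \<bar>W j\<bar>) \<le> (\<Sum>j\<in>{1..t+1}. ((m + 1) * (real t + 1)) ^ t)"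
      using grid_lagrange_basis(3)[of _ t "- m"] m_pos by (intro sum_mono) (simp add: W_def)
    also have "\<dots> \<le> (real t + 1) * ((\<delta> / \<epsilon> + 1) * (real t + 1)) ^ t"
      using m_pos m_le by (simp add: add.commute mult_left_mono power_mono)
    finally have "\<epsilon> * (\<Sum>j\<in>{1..t+1}. \<bar>W j\<bar>) * 5 \<le> \<epsilon> * ((real t + 1) * ((\<delta> / \<epsilon> + 1) * (real t + 1)) ^ t) * 5"
      using \<epsilon>_pos by (intro mult_right_mono mult_left_mono) auto
    also have "\<dots> = 5 * (real t + 1) * \<epsilon> * ((\<delta> / \<epsilon> + 1) * (real t + 1)) ^ t"
      by (simp only: mult_ac)
    finally show "\<epsilon> * (\<Sum>j\<in>{1..t+1}. \<bar>W j\<bar>) * 5 \<le> 1" using params(4) by linarith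
    show "\<bar>\<epsilon> * m / (1 - \<epsilon>)\<bar> \<le> 1"
      unfolding shift using params(2,3) \<epsilon>_pos by (simp add: le_divide_eq)
    show "j \<in> {1..t+1} \<Longrightarrow> 0 \<le> grid t j \<and> grid t j \<le> 1" for j
      by (rule grid_lagrange_basis(2))
  qed (use t \<epsilon>_pos params(1) in simp_all)
  have chi2_A: "chi2 A std_normal_density < exp (4 * \<delta>\<^sup>2 / \<epsilon>\<^sup>2)"
    using A_chi2(2) seven_plus_exp_less[OF params(2), of m] m_pos m_le
    by (simp add: power_divide)
  show ?thesis
    by (rule exI[of _ A], rule exI[of _ Q1], rule exI[of _ Q2])
      (use A_def is_density_A is_density_Q1 is_density_Q2 A_moment Q1_mean Q1_central_moment A_chi2(1)
        chi2_A in \<open>auto simp: shift\<close>)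
qed

theorem lemma6p14:
  "\<exists>C0 C1 C2 :: real. C0 > 0 \<and> C1 > 0 \<and> C2 > 0 \<and>
    (\<forall>(t::nat) (\<epsilon>::real). t \<ge> 1 \<longrightarrow> 0 < \<epsilon> \<longrightarrow> \<epsilon> \<le> (C0 * real t) powr (- real t) \<longrightarrow>
      (let \<delta> = (1/2000) * (1 / real t) * \<epsilon> powr (1 - 1 / real t) in
       \<exists>a q1 q2 :: real \<Rightarrow> real.
         is_density a \<and> is_density q1 \<and> is_density q2 \<and>
         (\<forall>x. a x = (1 - \<epsilon>) * q1 x + \<epsilon> * q2 x) \<and>
         (\<forall>k\<in>{1..t}. integrable lborel (\<lambda>x. x ^ k * a x) \<and>
            (LINT x|lborel. x ^ k * a x) = (LINT x|lborel. x ^ k * std_normal_density x)) \<and>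
         integrable lborel (\<lambda>x. x * q1 x) \<and> (LINT x|lborel. x * q1 x) = \<delta> \<and>
         (\<forall>i::nat. i \<ge> 1 \<longrightarrow> integrable lborel (\<lambda>x. \<bar>x - \<delta>\<bar> ^ i * q1 x) \<and>
            (LINT x|lborel. \<bar>x - \<delta>\<bar> ^ i * q1 x) powr (1 / real i) \<le> C1 * sqrt (real i)) \<and>
         integrable lborel (\<lambda>x. (a x)\<^sup>2 / std_normal_density x) \<and>
         chi2 a std_normal_density < exp (C2 * \<delta>\<^sup>2 / \<epsilon>\<^sup>2)))"
  unfolding Let_def
  by (intro exI[of _ 4000] exI[of _ 40] exI[of _ 4] conjI allI impI moment_matching_perturbation_exists) auto

end
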